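(* Let $R$ be a commutative ring with $1$ and $I$ a strongly pure ideal of $R$. Then $I$ is a regular ideal, i.e. $I$ is generated by a set of idempotent elements of $R$.
   Context: An ideal $I$ of a commutative ring $R$ is called strongly pure if $\operatorname{Ann}(f)+Rf=R$ for all $f\in I$. An ideal is called regular if it is generated by a set of idempotents. *)

theory Defs
  imports Main
begin

definition is_ideal :: "'a::comm_ring_1 set \<Rightarrow> bool" where
  "is_ideal I \<longleftrightarrow> 0 \<in> I \<and> (\<forall>x\<in>I. \<forall>y\<in>I. x + y \<in> I) \<and> (\<forall>r. \<forall>x\<in>I. r * x \<in> I)"

definition ideal_gen :: "'a::comm_ring_1 set \<Rightarrow> 'a set" where
  "ideal_gen S = \<Inter> {J. is_ideal J \<and> S \<subseteq> J}"

definition Ann :: "'a::comm_ring_1 \<Rightarrow> 'a set" where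
  "Ann f = {a. a * f = 0}"

definition strongly_pure :: "'a::comm_ring_1 set \<Rightarrow> bool" where
  "strongly_pure I \<longleftrightarrow> is_ideal I \<and>
     (\<forall>f\<in>I. {a + b | a b. a \<in> Ann f \<and> b \<in> {r * f | r. True}} = UNIV)"

definition idempotent :: "'a::comm_ring_1 \<Rightarrow> bool" where
  "idempotent e \<longleftrightarrow> e * e = e"

definition regular_ideal :: "'a::comm_ring_1 set \<Rightarrow> bool" where
  "regular_ideal I \<longleftrightarrow> (\<exists>E. (\<forall>e\<in>E. idempotent e) \<and> I = ideal_gen E)"

end

theory Submission
  imports Defs
begin

text \<open>If \<open>Ann f + Rf = R\<close>, write \<open>1 = a + r f\<close> with \<open>a f = 0\<close>; multiplying by \<open>f\<close> gives
  \<open>f = f (r f)\<close>, so \<open>e = r f\<close> is an idempotent of \<open>I\<close> with \<open>f = f e\<close>. Hence every element of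
  \<open>I\<close> is a multiple of an idempotent of \<open>I\<close>, and \<open>I\<close> is generated by its idempotents.\<close>

lemma ideal_gen_least:
  assumes "is_ideal J" and "S \<subseteq> J"
  shows "ideal_gen S \<subseteq> J"
  using assms by (auto simp: ideal_gen_def)

lemma ideal_gen_mult:
  assumes "e \<in> S"
  shows "r * e \<in> ideal_gen S"
  using assms by (auto simp: ideal_gen_def is_ideal_def)

lemma idempotent_mult_of_regular:
  fixes f r :: "'a::comm_ring_1"
  assumes "f * (r * f) = f"
  shows "idempotent (r * f)"
proof -
  have "(r * f) * (r * f) = r * (f * (r * f))" by (simp add: algebra_simps)
  also have "\<dots> = r * f" using assms by simp
  finally show ?thesis by (simp add: idempotent_def)
qed

lemma regular_of_Ann_plus_principal:
  fixes f :: "'a::comm_ring_1"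
  assumes "{a + b | a b. a \<in> Ann f \<and> b \<in> {r * f | r. True}} = UNIV"
  obtains r where "f * (r * f) = f"
proof -
  have "1 \<in> {a + b | a b. a \<in> Ann f \<and> b \<in> {r * f | r. True}}"
    using assms by simp
  then obtain a r where ann: "a * f = 0" and one: "1 = a + r * f"
    by (auto simp: Ann_def)
  have "f * (r * f) = f * (a + r * f)" using ann by (simp add: algebra_simps)
  also have "\<dots> = f" using one by simp
  finally show ?thesis by (rule that)
qed

lemma strongly_pure_ex_idempotent_mult_eq:
  assumes "strongly_pure I" and "f \<in> I"
  shows "\<exists>e\<in>I. idempotent e \<and> f * e = f"
proof -
  have ideal: "is_ideal I"
    and sp: "{a + b | a b. a \<in> Ann f \<and> b \<in> {r * f | r. True}} = UNIV"
    using assms by (auto simp: strongly_pure_def)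
  obtain r where "f * (r * f) = f"
    using regular_of_Ann_plus_principal[OF sp] .
  moreover have "r * f \<in> I"
    using ideal \<open>f \<in> I\<close> by (simp add: is_ideal_def)
  ultimately show ?thesis
    using idempotent_mult_of_regular by metis
qed

lemma ideal_eq_ideal_gen_idempotents:
  assumes "is_ideal I"
    and "\<And>f. f \<in> I \<Longrightarrow> \<exists>e\<in>I. idempotent e \<and> f * e = f"
  shows "I = ideal_gen {e \<in> I. idempotent e}"
proof
  show "ideal_gen {e \<in> I. idempotent e} \<subseteq> I"
    by (rule ideal_gen_least[OF assms(1)]) blast
  show "I \<subseteq> ideal_gen {e \<in> I. idempotent e}"
  proof
    fix f assume "f \<in> I"
    then obtain e where "e \<in> I" "idempotent e" "f * e = f"
      using assms(2) by blast
    then have "f * e \<in> ideal_gen {e \<in> I. idempotent e}"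
      by (intro ideal_gen_mult) simp
    with \<open>f * e = f\<close> show "f \<in> ideal_gen {e \<in> I. idempotent e}"
      by simp
  qed
qed

theorem proposition2p5:
  fixes I :: "'a::comm_ring_1 set"
  assumes "strongly_pure I"
  shows "regular_ideal I"
proof -
  have "is_ideal I" using assms by (simp add: strongly_pure_def)
  then have "I = ideal_gen {e \<in> I. idempotent e}"
    using strongly_pure_ex_idempotent_mult_eq[OF assms] by (rule ideal_eq_ideal_gen_idempotents)
  then show ?thesis
    unfolding regular_ideal_def by (intro exI[of _ "{e \<in> I. idempotent e}"]) simp
qed

end
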